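(* Let $N\ge 4$ be even and let $P_1,\dots,P_N$ be an $N$-periodic billiard trajectory in $E$, with outer polygon $P_1',\dots,P_N'$. For $j=1,2$ let $P'^{-1}_{j,i}=f_j+\dfrac{P_i'-f_j}{|P_i'-f_j|^2}$ be the inversion of $P_i'$ in the unit circle centered at $f_j$, and let $A_j'^\dagger$ be the signed area of the polygon $P'^{-1}_{j,1},\dots,P'^{-1}_{j,N}$. Then $A_1'^\dagger=A_2'^\dagger$, i.e. $A_1'^\dagger/A_2'^\dagger=1$.
   Context: Let $E$ be the ellipse $x^2/a^2+y^2/b^2=1$ with $a>b>0$, center $O=(0,0)$ and foci $f_1=(-\sqrt{a^2-b^2},0)$, $f_2=(\sqrt{a^2-b^2},0)$. An $N$-periodic billiard trajectory is a convex polygon with vertices $P_1,\dots,P_N\in E$ (indices mod $N$), listed counterclockwise and winding once around $O$, with $P_i\neq P_{i+1}$, such that at every vertex $P_i$ the normal line to $E$ at $P_i$ bisects the angle $\angle P_{i-1}P_iP_{i+1}$, and all of whose sides are tangent to a common ellipse confocal with $E$. Its outer polygon has vertices $P_i'$ = intersection of the tangent lines to $E$ at $P_i$ and at $P_{i+1}$. The signed area of a polygon with vertices $W_i=(x_i,y_i)$, $i=1,\dots,N$ (indices mod $N$), is $S=\tfrac12\sum_{i=1}^N (x_iy_{i+1}-x_{i+1}y_i)$. *)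

theory Defs
  imports "HOL-Analysis.Analysis"
begin

type_synonym pt = "real \<times> real"

definition cross :: "pt \<Rightarrow> pt \<Rightarrow> real" where
  "cross u v = fst u * snd v - snd u * fst v"

definition on_ellipse :: "real \<Rightarrow> real \<Rightarrow> pt \<Rightarrow> bool" where
  "on_ellipse a b p \<longleftrightarrow> (fst p)\<^sup>2 / a\<^sup>2 + (snd p)\<^sup>2 / b\<^sup>2 = 1"

definition focus1 :: "real \<Rightarrow> real \<Rightarrow> pt" where
  "focus1 a b = (- sqrt (a\<^sup>2 - b\<^sup>2), 0)"
definition focus2 :: "real \<Rightarrow> real \<Rightarrow> pt" where
  "focus2 a b = (sqrt (a\<^sup>2 - b\<^sup>2), 0)"

definition ell_normal :: "real \<Rightarrow> real \<Rightarrow> pt \<Rightarrow> pt" where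
  "ell_normal a b p = (fst p / a\<^sup>2, snd p / b\<^sup>2)"

definition on_tangent :: "real \<Rightarrow> real \<Rightarrow> pt \<Rightarrow> pt \<Rightarrow> bool" where
  "on_tangent a b p q \<longleftrightarrow> fst q * fst p / a\<^sup>2 + snd q * snd p / b\<^sup>2 = 1"

definition unitv :: "pt \<Rightarrow> pt" where
  "unitv v = (fst v / sqrt ((fst v)\<^sup>2 + (snd v)\<^sup>2), snd v / sqrt ((fst v)\<^sup>2 + (snd v)\<^sup>2))"

text \<open>The line through p and q is tangent to the ellipse x^2/al^2 + y^2/be^2 = 1:
  writing the line as u x + v y = w, the tangency condition is al^2 u^2 + be^2 v^2 = w^2.\<close>
definition line_tangent_ellipse :: "real \<Rightarrow> real \<Rightarrow> pt \<Rightarrow> pt \<Rightarrow> bool" where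
  "line_tangent_ellipse al be p q \<longleftrightarrow>
     (let u = snd q - snd p; v = fst p - fst q; w = u * fst p + v * snd p
      in al\<^sup>2 * u\<^sup>2 + be\<^sup>2 * v\<^sup>2 = w\<^sup>2)"

text \<open>N-periodic billiard trajectory, vertices P 0, ..., P (N-1), indices mod N.\<close>
definition billiard_traj :: "real \<Rightarrow> real \<Rightarrow> nat \<Rightarrow> (nat \<Rightarrow> pt) \<Rightarrow> bool" where
  "billiard_traj a b N P \<longleftrightarrow>
     (\<forall>i<N. on_ellipse a b (P i)) \<and>
     (\<forall>i<N. P i \<noteq> P ((i + 1) mod N)) \<and>
     \<comment> \<open>convex, counterclockwise: every other vertex strictly to the left of each side\<close>
     (\<forall>i<N. \<forall>j<N. j \<noteq> i \<and> j \<noteq> (i + 1) mod N \<longrightarrow>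
         cross (P ((i + 1) mod N) - P i) (P j - P i) > 0) \<and>
     \<comment> \<open>winds once around O: O strictly to the left of each side\<close>
     (\<forall>i<N. cross (P ((i + 1) mod N) - P i) (0 - P i) > 0) \<and>
     \<comment> \<open>reflection law: the normal line at P i bisects the angle at P i\<close>
     (\<forall>i<N. cross (unitv (P ((i + N - 1) mod N) - P i) + unitv (P ((i + 1) mod N) - P i))
                    (ell_normal a b (P i)) = 0) \<and>
     \<comment> \<open>all sides tangent to a common confocal ellipse\<close>
     (\<exists>al be. al > 0 \<and> be > 0 \<and> al\<^sup>2 - be\<^sup>2 = a\<^sup>2 - b\<^sup>2 \<and>
        (\<forall>i<N. line_tangent_ellipse al be (P i) (P ((i + 1) mod N))))"

definition outer_vertex :: "real \<Rightarrow> real \<Rightarrow> nat \<Rightarrow> (nat \<Rightarrow> pt) \<Rightarrow> nat \<Rightarrow> pt" where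
  "outer_vertex a b N P i = (THE q. on_tangent a b (P i) q \<and> on_tangent a b (P ((i + 1) mod N)) q)"

definition invert :: "pt \<Rightarrow> pt \<Rightarrow> pt" where
  "invert f q = f + (1 / ((fst (q - f))\<^sup>2 + (snd (q - f))\<^sup>2)) *\<^sub>R (q - f)"

definition signed_area :: "nat \<Rightarrow> (nat \<Rightarrow> pt) \<Rightarrow> real" where
  "signed_area N W = (1/2) * (\<Sum>i<N. fst (W i) * snd (W ((i + 1) mod N))
                                    - fst (W ((i + 1) mod N)) * snd (W i))"

end

theory Submission
  imports Defs
begin

text \<open>The trajectory is centrally symmetric, P (i + N/2) = - P i. Hence so is its outer
  polygon, V (i + N/2) = - V i, and since f1 = - f2, inverting V (i + N/2) about f1 gives the
  negative of inverting V i about f2. A cyclic relabelling and the reflection x \<mapsto> - x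
  preserve signed area, so the two areas agree.

  For the symmetry, write P i = (a cos \<theta>_i, b sin \<theta>_i). The affine map
  (x, y) \<mapsto> (x / a, y / b) sends E to the unit circle and the confocal caustic to an ellipse
  with semi-axes al / a \<le> 1 and be / b \<le> 1. The angles lift to a sequence increasing by less
  than pi per step and, by convexity, by exactly 2 pi over N steps. Chords of the circle tangent
  to a fixed inscribed ellipse cannot be strictly nested, so the half-turned sequence
  \<theta>_i + pi interleaves with \<theta>_i and, for N even, equals \<theta>_(i + N/2).\<close>

section \<open>Chords of the unit circle tangent to an inscribed ellipse\<close>

text \<open>The chord of the unit circle between the angles s and t is the line
  x cos m + y sin m = cos d with m = (s + t) / 2 and d = (t - s) / 2; it touches the ellipse with
  semi-axes p, q iff cos d equals the support function sqrt (p^2 cos^2 m + q^2 sin^2 m).\<close>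

definition circle_chord_tangent :: "real \<Rightarrow> real \<Rightarrow> real \<Rightarrow> real \<Rightarrow> bool" where
  "circle_chord_tangent p q s t \<longleftrightarrow>
     p\<^sup>2 * cos ((s + t) / 2) ^ 2 + q\<^sup>2 * sin ((s + t) / 2) ^ 2 = cos ((t - s) / 2) ^ 2"

lemma circle_chord_tangent_add_pi:
  assumes "circle_chord_tangent p q s t"
  shows "circle_chord_tangent p q (s + pi) (t + pi)"
proof -
  have mid: "(s + pi + (t + pi)) / 2 = (s + t) / 2 + pi" by (simp add: field_simps)
  show ?thesis using assms unfolding circle_chord_tangent_def mid by (simp add: cos_add sin_add)
qed

lemma tangent_chord_slope_bound:
  fixes p q m d :: real
  assumes "0 < p" "p \<le> 1" "0 < q" "q \<le> 1"
    and tangent: "p\<^sup>2 * cos m ^ 2 + q\<^sup>2 * sin m ^ 2 = cos d ^ 2"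
  shows "((q\<^sup>2 - p\<^sup>2) * sin m * cos m)\<^sup>2 \<le> (cos d * sin d)\<^sup>2"
proof -
  have "(cos d * sin d)\<^sup>2 = (p\<^sup>2 * cos m ^ 2 + q\<^sup>2 * sin m ^ 2)
      * ((sin m ^ 2 + cos m ^ 2) - (p\<^sup>2 * cos m ^ 2 + q\<^sup>2 * sin m ^ 2))"
    by (simp add: power_mult_distrib sin_squared_eq[of d] tangent)
  then have "(cos d * sin d)\<^sup>2 - ((q\<^sup>2 - p\<^sup>2) * sin m * cos m)\<^sup>2
      = p\<^sup>2 * (1 - p\<^sup>2) * cos m ^ 4 + q\<^sup>2 * (1 - q\<^sup>2) * sin m ^ 4
        + (p\<^sup>2 * (1 - p\<^sup>2) + q\<^sup>2 * (1 - q\<^sup>2)) * cos m ^ 2 * sin m ^ 2"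
    by algebra
  moreover have "p\<^sup>2 \<le> 1" "q\<^sup>2 \<le> 1" using assms by (auto simp: power_le_one)
  then have "0 \<le> p\<^sup>2 * (1 - p\<^sup>2) * cos m ^ 4 + q\<^sup>2 * (1 - q\<^sup>2) * sin m ^ 4
        + (p\<^sup>2 * (1 - p\<^sup>2) + q\<^sup>2 * (1 - q\<^sup>2)) * cos m ^ 2 * sin m ^ 2"
    by (intro add_nonneg_nonneg mult_nonneg_nonneg) auto
  ultimately show ?thesis by linarith
qed

lemma tangent_chord_lower_bound:
  fixes p q m d \<delta> :: real
  assumes pq: "0 < p" "p \<le> 1" "0 < q" "q \<le> 1"
    and tangent: "p\<^sup>2 * cos m ^ 2 + q\<^sup>2 * sin m ^ 2 = cos d ^ 2"
    and d: "0 < d" "d < pi / 2" and \<delta>: "\<bar>\<delta>\<bar> \<le> pi"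
  shows "cos d * cos (d + \<bar>\<delta>\<bar>) \<le> p\<^sup>2 * cos (m + \<delta>) * cos m + q\<^sup>2 * sin (m + \<delta>) * sin m"
proof -
  have cs: "0 < cos d" "0 < sin d" using d by (auto intro!: cos_gt_zero_pi sin_gt_zero)
  have "\<bar>(q\<^sup>2 - p\<^sup>2) * sin m * cos m\<bar> \<le> \<bar>cos d * sin d\<bar>"
    using tangent_chord_slope_bound[OF pq tangent] by (simp only: abs_le_square_iff)
  moreover have "sin \<bar>\<delta>\<bar> = \<bar>sin \<delta>\<bar>"
    using \<delta> sin_ge_zero[of \<delta>] sin_ge_zero[of "- \<delta>"] by (cases "\<delta> \<ge> 0") auto
  ultimately have "\<bar>(q\<^sup>2 - p\<^sup>2) * sin m * cos m * sin \<delta>\<bar> \<le> cos d * sin d * sin \<bar>\<delta>\<bar>"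
    using cs by (simp add: abs_mult mult_right_mono)
  moreover have "p\<^sup>2 * cos (m + \<delta>) * cos m + q\<^sup>2 * sin (m + \<delta>) * sin m
      = cos d ^ 2 * cos \<delta> + (q\<^sup>2 - p\<^sup>2) * sin m * cos m * sin \<delta>"
    unfolding tangent[symmetric] by (simp add: cos_add sin_add algebra_simps power2_eq_square)
  moreover have "cos d * cos (d + \<bar>\<delta>\<bar>) = cos d ^ 2 * cos \<delta> - cos d * sin d * sin \<bar>\<delta>\<bar>"
    by (simp add: cos_add power2_eq_square algebra_simps)
  ultimately show ?thesis by linarith
qed

text \<open>With m, d the mid-angle and half-width of the arcs, Lagrange's identity bounds A above
  by cos d * cos d', with equality only if m = m', and nesting together with
  tangent_chord_lower_bound bounds A below by the same quantity.\<close>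

lemma circle_chord_tangent_nested_eq:
  fixes p q s t s' t' :: real
  assumes pq: "0 < p" "p \<le> 1" "0 < q" "q \<le> 1"
    and tangent: "circle_chord_tangent p q s t" "circle_chord_tangent p q s' t'"
    and arcs: "s < t" "t < s + pi" "s' < t'" "t' < s' + pi"
    and nested: "s \<le> s'" "t' \<le> t"
  shows "s = s' \<and> t = t'"
proof -
  define m d m' d'
    where "m = (s + t) / 2" "d = (t - s) / 2" "m' = (s' + t') / 2" "d' = (t' - s') / 2"
  have bounds: "0 < d" "d < pi / 2" "0 < d'" "d' < pi / 2" "\<bar>m - m'\<bar> + d' \<le> d"
    using arcs nested unfolding m_d_m'_d'_def by (auto simp: abs_if field_simps)
  have cos_pos: "0 < cos d" "0 < cos d'" using bounds by (auto intro!: cos_gt_zero_pi)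
  have F: "p\<^sup>2 * cos m ^ 2 + q\<^sup>2 * sin m ^ 2 = cos d ^ 2"
    and F': "p\<^sup>2 * cos m' ^ 2 + q\<^sup>2 * sin m' ^ 2 = cos d' ^ 2"
    using tangent unfolding circle_chord_tangent_def m_d_m'_d'_def by simp_all
  define A where "A = p\<^sup>2 * cos m * cos m' + q\<^sup>2 * sin m * sin m'"
  have lagrange: "A\<^sup>2 + (p * q * sin (m' - m))\<^sup>2 = (cos d' * cos d)\<^sup>2"
    unfolding A_def power_mult_distrib F[symmetric] F'[symmetric] sin_diff by algebra
  have "cos d' * cos d \<le> cos d' * cos (d' + \<bar>m - m'\<bar>)"
    using cos_pos bounds by (intro mult_left_mono) (auto simp: cos_mono_le_eq)
  also have "\<dots> \<le> A"
    using tangent_chord_lower_bound[OF pq F', of "m - m'"] bounds by (simp add: A_def)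
  finally have lower: "cos d' * cos d \<le> A" .
  then have "(cos d' * cos d)\<^sup>2 \<le> A\<^sup>2" using cos_pos by (intro power_mono) auto
  then have "(p * q * sin (m' - m))\<^sup>2 = 0"
    using lagrange zero_le_power2[of "p * q * sin (m' - m)"] by linarith
  then have "sin (m' - m) = 0" using pq by simp
  moreover have "\<bar>m' - m\<bar> < pi" using bounds by linarith
  ultimately have "m = m'" using sin_eq_0_pi[of "m' - m"] by (simp add: abs_less_iff)
  have "A\<^sup>2 = (cos d' * cos d)\<^sup>2" using lagrange \<open>sin (m' - m) = 0\<close> by simp
  moreover have "0 \<le> cos d' * cos d" using cos_pos by simp
  ultimately have "A = cos d' * cos d"
    using lower power2_eq_iff_nonneg[of A "cos d' * cos d"] by linarith
  moreover have "A = cos d' * cos d'" using F' \<open>m = m'\<close> by (simp add: A_def power2_eq_square)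
  ultimately have "cos d' = cos d" using cos_pos by simp
  then have "d' = d" using cos_pos bounds by (auto intro: cos_inj_pi)
  with \<open>m = m'\<close> show ?thesis unfolding m_d_m'_d'_def by (auto simp: field_simps)
qed

definition tangent_chord_sequence :: "real \<Rightarrow> real \<Rightarrow> (nat \<Rightarrow> real) \<Rightarrow> bool" where
  "tangent_chord_sequence p q t \<longleftrightarrow>
     (\<forall>i. t i < t (Suc i) \<and> t (Suc i) < t i + pi \<and> circle_chord_tangent p q (t i) (t (Suc i)))"

lemma tangent_chord_sequence_strict_mono:
  "tangent_chord_sequence p q t \<Longrightarrow> strict_mono t"
  unfolding tangent_chord_sequence_def by (intro strict_monoI_Suc) blast

lemma tangent_chord_sequences_interleave:
  assumes pq: "0 < p" "p \<le> 1" "0 < q" "q \<le> 1"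
    and t: "tangent_chord_sequence p q t" and u: "tangent_chord_sequence p q u"
    and between: "t m \<le> u j" "u j < t (Suc m)"
  shows "t (Suc m) \<le> u (Suc j) \<and> u (Suc j) < t (Suc (Suc m))
    \<and> (u j = t m \<longrightarrow> u (Suc j) = t (Suc m))"
proof -
  note nested_eq = circle_chord_tangent_nested_eq[OF pq]
  note t_step = t[unfolded tangent_chord_sequence_def, rule_format]
  note u_step = u[unfolded tangent_chord_sequence_def, rule_format]
  have "t (Suc m) \<le> u (Suc j)"
  proof (rule ccontr)
    assume "\<not> t (Suc m) \<le> u (Suc j)"
    then show False
      using nested_eq[of "t m" "t (Suc m)" "u j" "u (Suc j)"] t_step[of m] u_step[of j] between
      by force
  qed
  moreover have "u (Suc j) < t (Suc (Suc m))"
  proof (rule ccontr)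
    assume "\<not> u (Suc j) < t (Suc (Suc m))"
    then show False
      using nested_eq[of "u j" "u (Suc j)" "t (Suc m)" "t (Suc (Suc m))"]
        t_step[of "Suc m"] u_step[of j] between
      by force
  qed
  moreover have "u (Suc j) = t (Suc m)" if "u j = t m"
    using nested_eq[of "u j" "u (Suc j)" "t m" "t (Suc m)"] t_step[of m] u_step[of j] that
      \<open>t (Suc m) \<le> u (Suc j)\<close>
    by force
  ultimately show ?thesis by blast
qed

text \<open>The half-turned sequence u = t + pi is again a tangent chord sequence, so by
  interleaving it stays in a fixed gap, t (k + j) \<le> u j < t (k + j + 1); the total turn 2 pi
  then forces N = 2 k and u j = t (k + j).\<close>

lemma tangent_chord_sequence_half_turn:
  assumes pq: "0 < p" "p \<le> 1" "0 < q" "q \<le> 1"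
    and t: "tangent_chord_sequence p q t" and turn: "t N = t 0 + 2 * pi" and "even N"
  shows "t (j + N div 2) = t j + pi"
proof -
  define u where "u i = t i + pi" for i
  have u: "tangent_chord_sequence p q u"
    unfolding tangent_chord_sequence_def
  proof
    fix i
    have "t i < t (Suc i)" "t (Suc i) < t i + pi" "circle_chord_tangent p q (t i) (t (Suc i))"
      using t by (auto simp: tangent_chord_sequence_def)
    then show "u i < u (Suc i) \<and> u (Suc i) < u i + pi \<and> circle_chord_tangent p q (u i) (u (Suc i))"
      unfolding u_def using circle_chord_tangent_add_pi by auto
  qed
  note interleave = tangent_chord_sequences_interleave[OF pq t u]
  have mono: "strict_mono t" using t by (rule tangent_chord_sequence_strict_mono)
  obtain k where k: "t k \<le> u 0" "u 0 < t (Suc k)"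
    using ex_least_nat_less[of "\<lambda>i. u 0 < t i" N] turn pi_gt_zero by (force simp: u_def)
  have between: "t (k + j) \<le> u j \<and> u j < t (Suc (k + j))" for j
  proof (induction j)
    case (Suc j)
    then show ?case using interleave[of "k + j" j] by simp
  qed (use k in simp)
  have "t (k + k) \<le> t N" using between[of k] k turn by (simp add: u_def)
  then have "k + k \<le> N" using mono by (simp add: strict_mono_less_eq)
  moreover have "t N < t (Suc (k + Suc k))" using between[of "Suc k"] k turn by (simp add: u_def)
  then have "N < Suc (k + Suc k)" using mono by (simp add: strict_mono_less)
  ultimately have "N = k + k" using \<open>even N\<close> by presburger
  then have "t k = u 0" using between[of k] k turn by (simp add: u_def)
  then have "t (k + j) = u j" for j
  proof (induction j)
    case (Suc j)
    then show ?case using interleave[of "k + j" j] between[of j] by simp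
  qed simp
  then show ?thesis using \<open>N = k + k\<close> by (simp add: u_def add.commute)
qed

section \<open>Points of the ellipse by eccentric angle\<close>

definition ellipse_point :: "real \<Rightarrow> real \<Rightarrow> real \<Rightarrow> pt" where
  "ellipse_point a b \<theta> = (a * cos \<theta>, b * sin \<theta>)"

lemma ellipse_point_exists:
  assumes "0 < a" "0 < b" "on_ellipse a b P"
  obtains \<theta> where "P = ellipse_point a b \<theta>"
proof -
  have "(fst P / a)\<^sup>2 + (snd P / b)\<^sup>2 = 1" using assms by (simp add: on_ellipse_def power_divide)
  then obtain \<theta> where "fst P / a = cos \<theta>" "snd P / b = sin \<theta>"
    using sincos_total_2pi by blast
  then have "P = ellipse_point a b \<theta>"
    using assms by (auto simp: ellipse_point_def field_simps prod_eq_iff)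
  then show thesis ..
qed

lemma ellipse_point_add_pi: "ellipse_point a b (\<theta> + pi) = - ellipse_point a b \<theta>"
  by (simp add: ellipse_point_def)

lemma ellipse_point_add_2pi: "ellipse_point a b (\<theta> + 2 * pi) = ellipse_point a b \<theta>"
  by (simp add: ellipse_point_def)

lemma cross_ellipse_point: "cross (ellipse_point a b s) (ellipse_point a b t) = a * b * sin (t - s)"
  by (simp add: cross_def ellipse_point_def sin_diff algebra_simps)

lemma cross_ellipse_chord:
  "cross (ellipse_point a b t - ellipse_point a b s) (ellipse_point a b z - ellipse_point a b s)
     = a * b * (sin (t - s) - sin (z - s) - sin (t - z))"
  by (simp add: cross_def ellipse_point_def sin_diff algebra_simps)

lemma sin_add_le:
  fixes x y :: real
  assumes "0 \<le> x" "0 \<le> y" "x + y \<le> pi"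
  shows "sin (x + y) \<le> sin x + sin y"
proof -
  have "0 \<le> sin x" "0 \<le> sin y" using assms by (auto intro!: sin_ge_zero)
  then have "sin x * cos y \<le> sin x" "cos x * sin y \<le> sin y"
    using mult_left_mono[of "cos y" 1 "sin x"] mult_right_mono[of "cos x" 1 "sin y"] by auto
  then show ?thesis by (simp add: sin_add)
qed

lemma cross_ellipse_arc_nonpos:
  assumes "0 < a" "0 < b" "x \<le> z" "z \<le> y" "y \<le> x + pi"
  shows "cross (ellipse_point a b y - ellipse_point a b x)
    (ellipse_point a b z - ellipse_point a b x) \<le> 0"
proof -
  have "sin (y - x) \<le> sin (z - x) + sin (y - z)"
    using sin_add_le[of "z - x" "y - z"] assms by simp
  moreover have "0 \<le> a * b" using assms by simp
  ultimately show ?thesis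
    unfolding cross_ellipse_chord by (intro mult_nonneg_nonpos) auto
qed

lemma ellipse_next_angle:
  assumes "0 < a" "0 < b" "on_ellipse a b Q" "0 < cross (ellipse_point a b s) Q"
  obtains \<delta> where "0 < \<delta>" "\<delta> < pi" "ellipse_point a b (s + \<delta>) = Q"
proof -
  obtain \<theta> where Q: "Q = ellipse_point a b \<theta>" using ellipse_point_exists assms(1-3) .
  have "0 < a * b * sin (\<theta> - s)" using assms(4) by (simp add: Q cross_ellipse_point)
  moreover have "0 < a * b" using assms(1,2) by simp
  ultimately have "0 < sin (\<theta> - s)" by (rule zero_less_mult_pos)
  moreover obtain \<delta> where \<delta>: "0 \<le> \<delta>" "\<delta> \<le> pi" "cos (\<theta> - s) = cos \<delta>" "sin (\<theta> - s) = sin \<delta>"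
    using sincos_total_pi[of "sin (\<theta> - s)" "cos (\<theta> - s)"] calculation by force
  ultimately have "\<delta> \<noteq> 0" "\<delta> \<noteq> pi" by auto
  moreover have "ellipse_point a b (s + \<delta>) = ellipse_point a b (s + (\<theta> - s))"
    unfolding ellipse_point_def cos_add sin_add \<delta> ..
  ultimately show thesis using \<delta>(1,2) Q by (intro that[of \<delta>]) auto
qed

lemma circle_chord_tangent_of_line_tangent:
  assumes ab: "0 < a" "0 < b" and st: "s < t" "t < s + pi"
    and tangent: "line_tangent_ellipse al be (ellipse_point a b s) (ellipse_point a b t)"
  shows "circle_chord_tangent (al / a) (be / b) s t"
proof -
  define m d where "m = (s + t) / 2" "d = (t - s) / 2"
  have s: "s = m - d" and t: "t = m + d" by (simp_all add: m_d_def field_simps)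
  have "sin d > 0" using st by (auto simp: m_d_def intro!: sin_gt_zero)
  have u: "b * sin t - b * sin s = 2 * b * cos m * sin d"
    unfolding s t by (simp add: sin_add sin_diff algebra_simps)
  have v: "a * cos s - a * cos t = 2 * a * sin m * sin d"
    unfolding s t by (simp add: cos_add cos_diff algebra_simps)
  have "(b * sin t - b * sin s) * (a * cos s) + (a * cos s - a * cos t) * (b * sin s)
      = a * b * sin (t - s)"
    by (simp add: sin_diff algebra_simps)
  also have "t - s = 2 * d" by (simp add: m_d_def)
  finally have w: "(b * sin t - b * sin s) * (a * cos s) + (a * cos s - a * cos t) * (b * sin s)
      = 2 * a * b * sin d * cos d"
    by (simp add: sin_double)
  have "al\<^sup>2 * (2 * b * cos m * sin d)\<^sup>2 + be\<^sup>2 * (2 * a * sin m * sin d)\<^sup>2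
      = (2 * a * b * sin d * cos d)\<^sup>2"
    using tangent unfolding line_tangent_ellipse_def Let_def ellipse_point_def fst_conv snd_conv
      w u[symmetric] v[symmetric] .
  moreover have "al\<^sup>2 = a\<^sup>2 * (al / a)\<^sup>2" "be\<^sup>2 = b\<^sup>2 * (be / b)\<^sup>2"
    using ab by (simp_all add: power_divide)
  ultimately have "(4 * a\<^sup>2 * b\<^sup>2 * sin d ^ 2) * ((al / a)\<^sup>2 * cos m ^ 2 + (be / b)\<^sup>2 * sin m ^ 2)
      = (4 * a\<^sup>2 * b\<^sup>2 * sin d ^ 2) * cos d ^ 2"
    by (simp add: algebra_simps)
  moreover have "4 * a\<^sup>2 * b\<^sup>2 * sin d ^ 2 \<noteq> 0" using ab \<open>sin d > 0\<close> by simp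
  ultimately show ?thesis unfolding circle_chord_tangent_def m_d_def[symmetric] by simp
qed

lemma confocal_caustic_inside:
  assumes ab: "0 < a" "0 < b" and albe: "0 < al" "0 < be" "al\<^sup>2 - be\<^sup>2 = a\<^sup>2 - b\<^sup>2"
    and tangent: "circle_chord_tangent (al / a) (be / b) s t" and st: "s < t" "t < s + pi"
  shows "al \<le> a \<and> be \<le> b"
proof -
  define m d where "m = (s + t) / 2" "d = (t - s) / 2"
  have "0 < sin d" using st by (auto simp: m_d_def intro!: sin_gt_zero)
  then have "cos d ^ 2 < 1" using sin_cos_squared_add[of d] zero_less_power2[of "sin d"] by linarith
  have "al \<le> a"
  proof (rule ccontr)
    assume "\<not> al \<le> a"
    then have "a\<^sup>2 < al\<^sup>2" using ab by (intro power_strict_mono) auto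
    then have "b\<^sup>2 < be\<^sup>2" using albe by simp
    have "1 < (al / a)\<^sup>2" "1 < (be / b)\<^sup>2"
      using \<open>a\<^sup>2 < al\<^sup>2\<close> \<open>b\<^sup>2 < be\<^sup>2\<close> ab by (simp_all add: power_divide)
    then have "cos m ^ 2 \<le> (al / a)\<^sup>2 * cos m ^ 2" "sin m ^ 2 \<le> (be / b)\<^sup>2 * sin m ^ 2"
      by (simp_all add: mult_le_cancel_right1)
    then have "1 \<le> (al / a)\<^sup>2 * cos m ^ 2 + (be / b)\<^sup>2 * sin m ^ 2"
      using sin_cos_squared_add[of m] by linarith
    then show False using tangent \<open>cos d ^ 2 < 1\<close> by (simp add: circle_chord_tangent_def m_d_def)
  qed
  then have "be\<^sup>2 \<le> b\<^sup>2" using albe power_mono[of al a 2] by linarith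
  then have "be \<le> b" by (rule power2_le_imp_le) (use ab in simp)
  with \<open>al \<le> a\<close> show ?thesis ..
qed

section \<open>Central symmetry of billiard trajectories\<close>

lemma billiard_traj_cross_pos:
  assumes "billiard_traj a b N P" "i < N"
  shows "0 < cross (P i) (P ((i + 1) mod N))"
  using assms unfolding billiard_traj_def by (auto simp: cross_def algebra_simps)

lemma billiard_traj_convex:
  assumes "billiard_traj a b N P" "i < N" "j < N" "j \<noteq> i" "j \<noteq> (i + 1) mod N"
  shows "0 < cross (P ((i + 1) mod N) - P i) (P j - P i)"
  using assms unfolding billiard_traj_def by blast

lemma billiard_traj_angle_lift:
  assumes ab: "0 < a" "0 < b" and "0 < N" and traj: "billiard_traj a b N P"
  obtains t where "\<And>i. t i < t (Suc i) \<and> t (Suc i) < t i + pi"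
    and "\<And>i. P (i mod N) = ellipse_point a b (t i)"
proof -
  have on_E: "on_ellipse a b (P i)" if "i < N" for i
    using traj that unfolding billiard_traj_def by blast
  have "\<exists>\<delta>. i < N \<and> P i = ellipse_point a b s \<longrightarrow>
      0 < \<delta> \<and> \<delta> < pi \<and> ellipse_point a b (s + \<delta>) = P ((i + 1) mod N)" for i s
    using ellipse_next_angle[OF ab on_E] billiard_traj_cross_pos[OF traj] \<open>0 < N\<close>
    by (metis mod_less_divisor)
  then obtain \<delta> where \<delta>: "\<And>i s. i < N \<Longrightarrow> P i = ellipse_point a b s \<Longrightarrow>
      0 < \<delta> i s \<and> \<delta> i s < pi \<and> ellipse_point a b (s + \<delta> i s) = P ((i + 1) mod N)"
    by metis
  obtain \<theta> where \<theta>: "P 0 = ellipse_point a b \<theta>"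
    using ellipse_point_exists[OF ab on_E[OF \<open>0 < N\<close>]] .
  define t where "t = rec_nat \<theta> (\<lambda>i s. s + \<delta> (i mod N) s)"
  have t_Suc: "t (Suc i) = t i + \<delta> (i mod N) (t i)" for i by (simp add: t_def)
  have t_P: "P (i mod N) = ellipse_point a b (t i)" for i
  proof (induction i)
    case (Suc i)
    then show ?case
      using \<delta>[of "i mod N" "t i"] \<open>0 < N\<close> by (simp add: t_Suc mod_Suc_eq)
  qed (simp add: t_def \<theta>)
  show thesis
  proof (rule that)
    show "t i < t (Suc i) \<and> t (Suc i) < t i + pi" for i
      using \<delta>[of "i mod N" "t i"] t_P[of i] \<open>0 < N\<close> by (simp add: t_Suc)
  qed (rule t_P)
qed

text \<open>Convexity excludes star polygons: if the lift completed a turn before the last vertex,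
  the vertex P 0 would lie on the arc cut off by a later side, that is, not strictly to its
  left.\<close>

lemma billiard_traj_lift_within_turn:
  assumes ab: "0 < a" "0 < b" and "0 < N" and traj: "billiard_traj a b N P"
    and steps: "\<And>i. t i < t (Suc i) \<and> t (Suc i) < t i + pi"
    and lift: "\<And>i. P (i mod N) = ellipse_point a b (t i)"
  shows "t (N - 1) < t 0 + 2 * pi"
proof (rule ccontr)
  assume "\<not> t (N - 1) < t 0 + 2 * pi"
  then obtain k where "k < N - 1" "\<forall>i\<le>k. \<not> t 0 + 2 * pi \<le> t i" "t 0 + 2 * pi \<le> t (Suc k)"
    using ex_least_nat_less[of "\<lambda>i. t 0 + 2 * pi \<le> t i" "N - 1"] pi_gt_zero by auto
  then have k: "k < N - 1" "t k < t 0 + 2 * pi" "t 0 + 2 * pi \<le> t (Suc k)" by auto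
  have "k \<noteq> 0"
  proof
    assume "k = 0"
    then show False using k steps[of 0] pi_gt_zero by simp
  qed
  then have "0 < cross (P ((k + 1) mod N) - P k) (P 0 - P k)"
    using k by (intro billiard_traj_convex[OF traj]) auto
  moreover have "(k + 1) mod N = Suc k" using k by simp
  moreover have "P k = ellipse_point a b (t k)" "P (Suc k) = ellipse_point a b (t (Suc k))"
    "P 0 = ellipse_point a b (t 0 + 2 * pi)"
    using lift[of k] lift[of "Suc k"] lift[of 0] k by (simp_all add: ellipse_point_add_2pi)
  ultimately show False
    using cross_ellipse_arc_nonpos[OF ab, of "t k" "t 0 + 2 * pi" "t (Suc k)"] k steps[of k]
    by simp
qed

lemma billiard_traj_lift_turns_once:
  assumes ab: "0 < a" "0 < b" and "0 < N" and traj: "billiard_traj a b N P"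
    and steps: "\<And>i. t i < t (Suc i) \<and> t (Suc i) < t i + pi"
    and lift: "\<And>i. P (i mod N) = ellipse_point a b (t i)"
  shows "t N = t 0 + 2 * pi"
proof -
  have "ellipse_point a b (t N) = ellipse_point a b (t 0)" using lift[of N] lift[of 0] by simp
  then have "cos (t N) = cos (t 0)" "sin (t N) = sin (t 0)"
    using ab by (simp_all add: ellipse_point_def)
  then obtain n :: int where n: "t N = t 0 + 2 * pi * n" using sin_cos_eq_iff by metis
  have "strict_mono t" using steps by (intro strict_monoI_Suc) auto
  then have "t 0 < t N" using \<open>0 < N\<close> by (simp add: strict_mono_less)
  then have "0 < n" using n by (simp add: zero_less_mult_iff)
  have "t (N - 1) < t 0 + 2 * pi"
    using ab \<open>0 < N\<close> traj steps lift by (rule billiard_traj_lift_within_turn)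
  moreover have "t N < t (N - 1) + pi" using steps[of "N - 1"] \<open>0 < N\<close> by simp
  ultimately have "2 * pi * n < 2 * pi * 2" using n pi_gt_zero by linarith
  then have "n < 2" by simp
  with \<open>0 < n\<close> show ?thesis using n by simp
qed

lemma billiard_traj_centrally_symmetric:
  assumes ab: "0 < a" "0 < b" and "0 < N" "even N" and traj: "billiard_traj a b N P"
  shows "P ((i + N div 2) mod N) = - P (i mod N)"
proof -
  obtain t where steps: "\<And>i. t i < t (Suc i) \<and> t (Suc i) < t i + pi"
    and lift: "\<And>i. P (i mod N) = ellipse_point a b (t i)"
    using billiard_traj_angle_lift[OF ab \<open>0 < N\<close> traj] by metis
  have turn: "t N = t 0 + 2 * pi"
    using billiard_traj_lift_turns_once[OF ab \<open>0 < N\<close> traj steps lift] .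
  obtain al be where albe: "0 < al" "0 < be" "al\<^sup>2 - be\<^sup>2 = a\<^sup>2 - b\<^sup>2"
    and tangent: "\<And>i. i < N \<Longrightarrow> line_tangent_ellipse al be (P i) (P ((i + 1) mod N))"
    using traj unfolding billiard_traj_def by blast
  have chord: "circle_chord_tangent (al / a) (be / b) (t i) (t (Suc i))" for i
  proof -
    have "line_tangent_ellipse al be (P (i mod N)) (P (Suc i mod N))"
      using tangent[of "i mod N"] \<open>0 < N\<close> by (simp add: mod_Suc_eq)
    then show ?thesis
      using circle_chord_tangent_of_line_tangent[OF ab] steps[of i] lift by simp
  qed
  then have chords: "tangent_chord_sequence (al / a) (be / b) t"
    using steps unfolding tangent_chord_sequence_def by blast
  have "al \<le> a" "be \<le> b"
    using confocal_caustic_inside[OF ab albe chord] steps[of 0] by auto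
  then have "t (i + N div 2) = t i + pi"
    using tangent_chord_sequence_half_turn[OF _ _ _ _ chords turn \<open>even N\<close>] ab albe by simp
  then show ?thesis using lift by (simp add: ellipse_point_add_pi)
qed

section \<open>The outer polygon and signed areas\<close>

definition tangent_intersection :: "real \<Rightarrow> real \<Rightarrow> pt \<Rightarrow> pt \<Rightarrow> pt" where
  "tangent_intersection a b X Y =
     (a\<^sup>2 * (snd Y - snd X) / cross X Y, b\<^sup>2 * (fst X - fst Y) / cross X Y)"

lemma the_tangent_intersection:
  assumes "0 < a" "0 < b" "cross X Y \<noteq> 0"
  shows "(THE q. on_tangent a b X q \<and> on_tangent a b Y q) = tangent_intersection a b X Y"
proof (rule the_equality)
  have "on_tangent a b Z (tangent_intersection a b X Y) \<longleftrightarrow>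
      cross X Y = (snd Y - snd X) * fst Z + (fst X - fst Y) * snd Z" for Z
    using assms
    by (simp add: on_tangent_def tangent_intersection_def) (simp add: add_divide_distrib[symmetric])
  then show "on_tangent a b X (tangent_intersection a b X Y)
      \<and> on_tangent a b Y (tangent_intersection a b X Y)"
    by (simp add: cross_def algebra_simps)
next
  fix q assume "on_tangent a b X q \<and> on_tangent a b Y q"
  then have "fst q * fst X * b\<^sup>2 + snd q * snd X * a\<^sup>2 = a\<^sup>2 * b\<^sup>2"
    "fst q * fst Y * b\<^sup>2 + snd q * snd Y * a\<^sup>2 = a\<^sup>2 * b\<^sup>2"
    using assms by (auto simp: on_tangent_def field_simps)
  then have "fst q * cross X Y * b\<^sup>2 = a\<^sup>2 * (snd Y - snd X) * b\<^sup>2"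
    "snd q * cross X Y * a\<^sup>2 = b\<^sup>2 * (fst X - fst Y) * a\<^sup>2"
    unfolding cross_def by algebra+
  then have "fst q * cross X Y = a\<^sup>2 * (snd Y - snd X)" "snd q * cross X Y = b\<^sup>2 * (fst X - fst Y)"
    using assms by simp_all
  then show "q = tangent_intersection a b X Y"
    using assms by (simp add: tangent_intersection_def prod_eq_iff eq_divide_eq)
qed

lemma tangent_intersection_uminus:
  "tangent_intersection a b (- X) (- Y) = - tangent_intersection a b X Y"
proof -
  have "cross (- X) (- Y) = cross X Y" by (simp add: cross_def)
  then show ?thesis by (simp add: tangent_intersection_def algebra_simps minus_divide_left)
qed

lemma billiard_traj_outer_vertex:
  assumes "0 < a" "0 < b" "billiard_traj a b N P" "i < N"
  shows "outer_vertex a b N P i = tangent_intersection a b (P i) (P ((i + 1) mod N))"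
  unfolding outer_vertex_def
  using billiard_traj_cross_pos[OF assms(3,4)]
  by (intro the_tangent_intersection[OF assms(1,2)]) simp

lemma billiard_traj_outer_vertex_symmetric:
  assumes ab: "0 < a" "0 < b" and "0 < N" "even N" and traj: "billiard_traj a b N P" and "i < N"
  shows "outer_vertex a b N P ((i + N div 2) mod N) = - outer_vertex a b N P i"
proof -
  have "((i + N div 2) mod N + 1) mod N = (i + 1 + N div 2) mod N" by (simp add: mod_Suc_eq)
  moreover have "P ((i + 1 + N div 2) mod N) = - P ((i + 1) mod N)"
    using billiard_traj_centrally_symmetric[OF ab \<open>0 < N\<close> \<open>even N\<close> traj, of "i + 1"] by simp
  moreover have "P ((i + N div 2) mod N) = - P i"
    using billiard_traj_centrally_symmetric[OF ab \<open>0 < N\<close> \<open>even N\<close> traj, of i] \<open>i < N\<close> by simp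
  ultimately show ?thesis
    using \<open>0 < N\<close> \<open>i < N\<close>
    by (simp add: billiard_traj_outer_vertex[OF ab traj] tangent_intersection_uminus)
qed

lemma invert_uminus: "invert (- f) (- q) = - invert f q"
proof -
  have "(fst (- q - - f))\<^sup>2 + (snd (- q - - f))\<^sup>2 = (fst (q - f))\<^sup>2 + (snd (q - f))\<^sup>2"
    by (simp add: power2_eq_square algebra_simps)
  then show ?thesis unfolding invert_def by (simp add: algebra_simps)
qed

lemma focus1_eq_uminus_focus2: "focus1 a b = - focus2 a b"
  by (simp add: focus1_def focus2_def)

lemma sum_lessThan_rotate:
  fixes g :: "nat \<Rightarrow> 'a::comm_monoid_add"
  assumes "0 < N"
  shows "(\<Sum>i<N. g ((i + k) mod N)) = (\<Sum>i<N. g i)"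
proof -
  define k' where "k' = N - k mod N"
  have inverse: "(x + k' + k) mod N = x mod N" for x
  proof -
    have "x + k' + k = x + N + N * (k div N)"
      using mod_less_divisor[OF assms, of k] mult_div_mod_eq[of N k] unfolding k'_def by arith
    then show ?thesis by (simp only:) simp
  qed
  show ?thesis
  proof (rule sum.reindex_bij_witness[where i = "\<lambda>j. (j + k') mod N" and j = "\<lambda>i. (i + k) mod N"])
    fix i assume "i \<in> {..<N}"
    then show "((i + k) mod N + k') mod N = i" "((i + k') mod N + k) mod N = i"
      using inverse[of i] by (simp_all add: mod_add_left_eq mod_add_right_eq ac_simps)
  qed (use assms in auto)
qed

lemma signed_area_cong:
  "(\<And>i. i < N \<Longrightarrow> V i = W i) \<Longrightarrow> signed_area N V = signed_area N W"
  unfolding signed_area_def by (intro arg_cong[where f = "(*) (1 / 2)"] sum.cong) auto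

lemma signed_area_rotate:
  assumes "0 < N"
  shows "signed_area N (\<lambda>i. W ((i + k) mod N)) = signed_area N W"
proof -
  have "((i + 1) mod N + k) mod N = ((i + k) mod N + 1) mod N" for i
    by (simp only: mod_add_left_eq) (simp add: ac_simps)
  then show ?thesis
    unfolding signed_area_def
    using sum_lessThan_rotate[OF assms, of
        "\<lambda>j. fst (W j) * snd (W ((j + 1) mod N)) - fst (W ((j + 1) mod N)) * snd (W j)" k]
    by simp
qed

lemma signed_area_uminus: "signed_area N (\<lambda>i. - W i) = signed_area N W"
  by (simp add: signed_area_def)

theorem mainTheorem5:
  fixes a b :: real and N :: nat and P :: "nat \<Rightarrow> real \<times> real"
  assumes "a > b" and "b > 0" and "N \<ge> 4" and "even N"
    and "billiard_traj a b N P"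
  shows "signed_area N (\<lambda>i. invert (focus1 a b) (outer_vertex a b N P i))
       = signed_area N (\<lambda>i. invert (focus2 a b) (outer_vertex a b N P i))"
proof -
  have ab: "0 < a" "0 < b" and "0 < N" using assms by auto
  define W where "W f i = invert f (outer_vertex a b N P i)" for f i
  have "signed_area N (W (focus1 a b)) = signed_area N (\<lambda>i. W (focus1 a b) ((i + N div 2) mod N))"
    using signed_area_rotate[OF \<open>0 < N\<close>] by metis
  also have "\<dots> = signed_area N (\<lambda>i. - W (focus2 a b) i)"
  proof (rule signed_area_cong)
    fix i assume "i < N"
    then show "W (focus1 a b) ((i + N div 2) mod N) = - W (focus2 a b) i"
      using billiard_traj_outer_vertex_symmetric[OF ab \<open>0 < N\<close> \<open>even N\<close> assms(5)]
      by (simp add: W_def focus1_eq_uminus_focus2 invert_uminus)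
  qed
  also have "\<dots> = signed_area N (W (focus2 a b))" by (rule signed_area_uminus)
  finally show ?thesis unfolding W_def .
qed

end
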